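(* Let $X\in\mathbb{R}^{n\times m}$ ($m\ge n$) be a full rank matrix, and let $\mathcal S\subseteq[m]$ be any subset of cardinality $k$ ($n\le k\le m$) such that $X_{\mathcal S}$ is full rank. For $i=1,\dots,n$, let $Y_i\in\mathbb{R}^{(n-1)\times m}$ be the matrix obtained from $X$ by removing its $i$-th row. Then $$\|X_{\mathcal S}^{\dagger}\|_F^2=\frac{\sum_{i=1}^n\det\big((Y_i)_{\mathcal S}(Y_i)_{\mathcal S}^T\big)}{\det\big(X_{\mathcal S}X_{\mathcal S}^T\big)}.$$ Moreover, writing $X=[x_1,\dots,x_m]$ in columns, if $\mathcal S$ has cardinality exactly $n$ then $$\|X_{\mathcal S}^{-1}\|_F^2\le \|X^{\dagger}\|_2^2\cdot\frac{\sum_{j=1}^m\sum_{i=1}^n\det\big(X_{\mathcal S}(i\to x_j)\big)^2}{\det(X_{\mathcal S})^2},$$ and if $X$ has orthonormal rows this inequality is an equality.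
   Context: $[m]=\{1,\dots,m\}$; for $\mathcal S\subseteq[m]$, $X_{\mathcal S}$ (resp. $(Y_i)_{\mathcal S}$) is the submatrix of columns indexed by $\mathcal S$, in increasing order. $A^\dagger$ is the Moore–Penrose pseudo-inverse; $\|\cdot\|_2,\|\cdot\|_F$ spectral and Frobenius norms. For a square matrix $A$, index $i$ and vector $v$, $A(i\to v)$ denotes the matrix obtained by replacing the $i$-th column of $A$ by $v$. *)

theory Defs
  imports "Jordan_Normal_Form.Determinant" "Jordan_Normal_Form.DL_Rank"
          "Jordan_Normal_Form.DL_Submatrix" Complex_Main
begin

definition full_rank :: "real mat \<Rightarrow> bool" where
  "full_rank A \<longleftrightarrow> vec_space.rank (dim_row A) A = min (dim_row A) (dim_col A)"

definition pinv :: "real mat \<Rightarrow> real mat" where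
  "pinv A = (THE B. B \<in> carrier_mat (dim_col A) (dim_row A) \<and>
                    A * B * A = A \<and> B * A * B = B \<and>
                    transpose_mat (A * B) = A * B \<and> transpose_mat (B * A) = B * A)"

definition vnorm :: "real vec \<Rightarrow> real" where
  "vnorm v = sqrt (v \<bullet> v)"

definition frob_norm :: "real mat \<Rightarrow> real" where
  "frob_norm A = sqrt (\<Sum>i<dim_row A. \<Sum>j<dim_col A. (A $$ (i,j))^2)"

definition spec_norm :: "real mat \<Rightarrow> real" where
  "spec_norm A = Sup {vnorm (A *\<^sub>v v) | v. v \<in> carrier_vec (dim_col A) \<and> vnorm v \<le> 1}"

text \<open>Columns indexed by S, in increasing order.\<close>
definition cols_sub :: "real mat \<Rightarrow> nat set \<Rightarrow> real mat" where
  "cols_sub A S = submatrix A UNIV S"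

definition del_row :: "real mat \<Rightarrow> nat \<Rightarrow> real mat" where
  "del_row A i = submatrix A (UNIV - {i}) UNIV"

end

theory Submission
  imports Defs
begin

text \<open>
  For a matrix \<open>M\<close> of full row rank, \<open>M\<^sup>\<dagger> = M\<^sup>T (M M\<^sup>T)\<^sup>-\<^sup>1\<close>, so
  \<open>\<parallel>M\<^sup>\<dagger>\<parallel>\<^sub>F\<^sup>2\<close> is the trace of \<open>(M M\<^sup>T)\<^sup>-\<^sup>1\<close>, which the adjugate formula
  writes as the sum of the principal minors of \<open>M M\<^sup>T\<close> over its determinant. For
  \<open>M = X\<^sub>S\<close>, deleting row and column \<open>i\<close> of the Gram matrix gives the Gram matrix of
  \<open>(Y\<^sub>i)\<^sub>S\<close>.

  For square \<open>X\<^sub>S\<close>, Cramer's rule identifies \<open>det X\<^sub>S(i \<rightarrow> x\<^sub>j) / det X\<^sub>S\<close>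
  with the \<open>(i, j)\<close> entry of \<open>B = X\<^sub>S\<^sup>-\<^sup>1 X\<close>. Since \<open>X X\<^sup>\<dagger> = I\<close>, we have
  \<open>X\<^sub>S\<^sup>-\<^sup>1 = B X\<^sup>\<dagger>\<close>, and \<open>\<parallel>B P\<parallel>\<^sub>F \<le> \<parallel>P\<parallel>\<^sub>2 \<parallel>B\<parallel>\<^sub>F\<close> gives the inequality.
  If \<open>X\<close> has orthonormal rows then \<open>X\<^sup>\<dagger> = X\<^sup>T\<close> is an isometry, so
  \<open>\<parallel>X\<^sup>\<dagger>\<parallel>\<^sub>2 = 1\<close> and \<open>\<parallel>B\<parallel>\<^sub>F = \<parallel>X\<^sub>S\<^sup>-\<^sup>1\<parallel>\<^sub>F\<close>.
\<close>

lemma Cauchy_Schwarz_sum: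
  fixes a b :: "'a \<Rightarrow> real"
  shows "(\<Sum>i\<in>I. a i * b i)\<^sup>2 \<le> (\<Sum>i\<in>I. (a i)\<^sup>2) * (\<Sum>i\<in>I. (b i)\<^sup>2)"
proof -
  have AB: "(\<Sum>i\<in>I. (a i)\<^sup>2) * (\<Sum>j\<in>I. (b j)\<^sup>2) = (\<Sum>i\<in>I. \<Sum>j\<in>I. (a i)\<^sup>2 * (b j)\<^sup>2)"
    by (rule sum_product)
  also have "\<dots> = (\<Sum>i\<in>I. \<Sum>j\<in>I. (a j)\<^sup>2 * (b i)\<^sup>2)"
    by (rule sum.swap)
  finally have BA: "(\<Sum>i\<in>I. (a i)\<^sup>2) * (\<Sum>j\<in>I. (b j)\<^sup>2) = (\<Sum>i\<in>I. \<Sum>j\<in>I. (a j)\<^sup>2 * (b i)\<^sup>2)" .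
  have CC: "(\<Sum>i\<in>I. a i * b i)\<^sup>2 = (\<Sum>i\<in>I. \<Sum>j\<in>I. (a i * b i) * (a j * b j))"
    by (simp add: power2_eq_square sum_product)
  \<comment> \<open>Lagrange's identity\<close>
  have "0 \<le> (\<Sum>i\<in>I. \<Sum>j\<in>I. (a i * b j - a j * b i)\<^sup>2)"
    by (intro sum_nonneg) simp
  also have "\<dots> = (\<Sum>i\<in>I. \<Sum>j\<in>I. (a i)\<^sup>2 * (b j)\<^sup>2 + (a j)\<^sup>2 * (b i)\<^sup>2 - 2 * ((a i * b i) * (a j * b j)))"
    by (intro sum.cong refl) (simp add: power2_diff power_mult_distrib algebra_simps)
  also have "\<dots> = 2 * ((\<Sum>i\<in>I. (a i)\<^sup>2) * (\<Sum>i\<in>I. (b i)\<^sup>2) - (\<Sum>i\<in>I. a i * b i)\<^sup>2)"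
    unfolding CC by (simp add: AB[symmetric] BA[symmetric] sum.distrib sum_subtractf sum_distrib_left)
  finally show ?thesis by simp
qed

lemma scalar_prod_self_eq_sum: "(v :: real vec) \<bullet> v = (\<Sum>i<dim_vec v. (v $ i)\<^sup>2)"
  unfolding scalar_prod_def by (simp add: power2_eq_square lessThan_atLeast0)

lemma scalar_prod_self_ge_0: "0 \<le> (v :: real vec) \<bullet> v"
  unfolding scalar_prod_self_eq_sum by (simp add: sum_nonneg)

lemma scalar_prod_self_eq_0_iff: "(v :: real vec) \<in> carrier_vec n \<Longrightarrow> v \<bullet> v = 0 \<longleftrightarrow> v = 0\<^sub>v n"
  using conjugate_square_eq_0_vec[of v n] by simp

lemma vnorm_ge_0: "0 \<le> vnorm v"
  unfolding vnorm_def using scalar_prod_self_ge_0 by simp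

lemma vnorm_power2: "(vnorm v)\<^sup>2 = v \<bullet> v"
  unfolding vnorm_def using scalar_prod_self_ge_0 by simp

lemma vnorm_smult: "vnorm (c \<cdot>\<^sub>v v) = \<bar>c\<bar> * vnorm v"
proof -
  have "(c \<cdot>\<^sub>v v) \<bullet> (c \<cdot>\<^sub>v v) = c\<^sup>2 * (v \<bullet> v)"
    unfolding scalar_prod_self_eq_sum by (simp add: power_mult_distrib sum_distrib_left)
  then show ?thesis
    unfolding vnorm_def by (simp add: real_sqrt_mult)
qed

lemma scalar_prod_power2_le:
  fixes v w :: "real vec"
  assumes "dim_vec w = dim_vec v"
  shows "(v \<bullet> w)\<^sup>2 \<le> (v \<bullet> v) * (w \<bullet> w)"
  using Cauchy_Schwarz_sum[of "\<lambda>i. v $ i" "\<lambda>i. w $ i" "{0..<dim_vec v}"] assms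
  by (simp add: scalar_prod_def power2_eq_square)

lemma scalar_prod_le_vnorm:
  fixes v w :: "real vec"
  assumes "dim_vec w = dim_vec v"
  shows "v \<bullet> w \<le> vnorm v * vnorm w"
proof -
  have "\<bar>v \<bullet> w\<bar> \<le> sqrt ((v \<bullet> v) * (w \<bullet> w))"
    using real_sqrt_le_mono[OF scalar_prod_power2_le[OF assms]] by simp
  then show ?thesis
    unfolding vnorm_def by (simp add: real_sqrt_mult)
qed

lemma frob_norm_ge_0: "0 \<le> frob_norm A"
  unfolding frob_norm_def by (auto intro!: sum_nonneg)

lemma frob_norm_power2: "(frob_norm A)\<^sup>2 = (\<Sum>i<dim_row A. \<Sum>j<dim_col A. (A $$ (i, j))\<^sup>2)"
  unfolding frob_norm_def by (simp add: sum_nonneg)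

lemma frob_norm_power2_rows: "(frob_norm A)\<^sup>2 = (\<Sum>i<dim_row A. (vnorm (row A i))\<^sup>2)"
  unfolding frob_norm_power2 vnorm_power2 scalar_prod_self_eq_sum by simp

lemma frob_norm_power2_gram_diag:
  "(frob_norm A)\<^sup>2 = (\<Sum>j<dim_col A. (transpose_mat A * A) $$ (j, j))"
  unfolding frob_norm_power2
  by (subst sum.swap) (simp add: scalar_prod_def power2_eq_square lessThan_atLeast0)

lemma row_mult_eq_transpose_mult_vec:
  fixes A B :: "'a :: comm_semiring_0 mat"
  assumes "A \<in> carrier_mat r k" and "B \<in> carrier_mat k c" and "i < r"
  shows "row (A * B) i = transpose_mat B *\<^sub>v row A i"
proof (rule eq_vecI)
  fix j assume "j < dim_vec (transpose_mat B *\<^sub>v row A i)"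
  then show "row (A * B) i $ j = (transpose_mat B *\<^sub>v row A i) $ j"
    using assms comm_scalar_prod[of "row A i" k "col B j"] by simp
qed (use assms in simp)

lemma vnorm_mult_mat_vec_le_frob_norm:
  assumes v: "v \<in> carrier_vec (dim_col A)"
  shows "vnorm (A *\<^sub>v v) \<le> frob_norm A * vnorm v"
proof (rule power2_le_imp_le)
  have "(vnorm (A *\<^sub>v v))\<^sup>2 = (\<Sum>i<dim_row A. (row A i \<bullet> v)\<^sup>2)"
    by (simp add: vnorm_power2 scalar_prod_self_eq_sum)
  also have "\<dots> \<le> (\<Sum>i<dim_row A. (row A i \<bullet> row A i) * (v \<bullet> v))"
    using v by (intro sum_mono scalar_prod_power2_le) auto
  also have "\<dots> = (frob_norm A * vnorm v)\<^sup>2"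
    by (simp add: frob_norm_power2_rows power_mult_distrib vnorm_power2 sum_distrib_right)
  finally show "(vnorm (A *\<^sub>v v))\<^sup>2 \<le> (frob_norm A * vnorm v)\<^sup>2" .
qed (intro mult_nonneg_nonneg frob_norm_ge_0 vnorm_ge_0)

lemma vnorm_le_spec_norm:
  assumes "u \<in> carrier_vec (dim_col A)" and "vnorm u \<le> 1"
  shows "vnorm (A *\<^sub>v u) \<le> spec_norm A"
  unfolding spec_norm_def
proof (rule cSup_upper)
  show "bdd_above {vnorm (A *\<^sub>v v) |v. v \<in> carrier_vec (dim_col A) \<and> vnorm v \<le> 1}"
  proof (rule bdd_aboveI, clarify)
    fix v assume v: "v \<in> carrier_vec (dim_col A)" "vnorm v \<le> 1"
    have "vnorm (A *\<^sub>v v) \<le> frob_norm A * vnorm v"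
      by (rule vnorm_mult_mat_vec_le_frob_norm[OF v(1)])
    also have "\<dots> \<le> frob_norm A"
      using v(2) frob_norm_ge_0 by (simp add: mult_left_le)
    finally show "vnorm (A *\<^sub>v v) \<le> frob_norm A" .
  qed
qed (use assms in blast)

lemma spec_norm_ge_0: "0 \<le> spec_norm A"
proof -
  have "vnorm (0\<^sub>v (dim_col A)) = 0"
    by (simp add: vnorm_def)
  then show ?thesis
    using vnorm_le_spec_norm[of "0\<^sub>v (dim_col A)" A] vnorm_ge_0 by (auto intro: order_trans)
qed

lemma spec_norm_bound:
  assumes v: "v \<in> carrier_vec (dim_col A)"
  shows "vnorm (A *\<^sub>v v) \<le> spec_norm A * vnorm v"
proof (cases "vnorm v = 0")
  case True
  then show ?thesis
    using vnorm_mult_mat_vec_le_frob_norm[OF v] by simp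
next
  case False
  then have pos: "0 < vnorm v"
    using vnorm_ge_0[of v] by simp
  define u where "u = (1 / vnorm v) \<cdot>\<^sub>v v"
  have "A *\<^sub>v u = (1 / vnorm v) \<cdot>\<^sub>v (A *\<^sub>v v)"
    unfolding u_def using v by (intro mult_mat_vec) auto
  then have "vnorm (A *\<^sub>v v) / vnorm v = vnorm (A *\<^sub>v u)"
    using pos by (simp add: vnorm_smult)
  also have "\<dots> \<le> spec_norm A"
    using v pos by (intro vnorm_le_spec_norm) (auto simp: u_def vnorm_smult)
  finally show ?thesis
    using pos by (simp add: divide_le_eq)
qed

lemma spec_norm_transpose_bound:
  assumes w: "w \<in> carrier_vec (dim_row A)"
  shows "vnorm (transpose_mat A *\<^sub>v w) \<le> spec_norm A * vnorm w"
proof -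
  define u where "u = transpose_mat A *\<^sub>v w"
  have u: "u \<in> carrier_vec (dim_col A)"
    unfolding u_def by (simp add: carrier_vecI)
  have A: "A \<in> carrier_mat (dim_row A) (dim_col A)"
    by (rule carrier_matI) auto
  have "vnorm u * vnorm u = u \<bullet> u"
    by (simp flip: vnorm_power2 add: power2_eq_square)
  also have "\<dots> = w \<bullet> (A *\<^sub>v u)"
    by (rule transpose_vec_mult_scalar[OF A u w, folded u_def])
  also have "\<dots> \<le> vnorm w * vnorm (A *\<^sub>v u)"
    using w by (intro scalar_prod_le_vnorm) simp
  also have "\<dots> \<le> vnorm w * (spec_norm A * vnorm u)"
    using spec_norm_bound[OF u] vnorm_ge_0 by (rule mult_left_mono)
  also have "\<dots> = (spec_norm A * vnorm w) * vnorm u"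
    by (simp only: ac_simps)
  finally have key: "vnorm u * vnorm u \<le> (spec_norm A * vnorm w) * vnorm u" .
  have "vnorm u \<le> spec_norm A * vnorm w"
  proof (cases "vnorm u = 0")
    case True
    then show ?thesis
      using spec_norm_ge_0[of A] vnorm_ge_0[of w] by simp
  next
    case False
    then show ?thesis
      using vnorm_ge_0[of u] by (intro mult_right_le_imp_le[OF key]) simp
  qed
  then show ?thesis
    unfolding u_def .
qed

lemma spec_norm_eq_1_if_isometry:
  assumes "0 < dim_col A" and iso: "\<And>v. v \<in> carrier_vec (dim_col A) \<Longrightarrow> vnorm (A *\<^sub>v v) = vnorm v"
  shows "spec_norm A = 1"
  unfolding spec_norm_def
proof (rule cSup_eq_maximum)
  have "vnorm (unit_vec (dim_col A) 0) = 1"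
    using assms(1) by (simp add: vnorm_def)
  then show "1 \<in> {vnorm (A *\<^sub>v v) |v. v \<in> carrier_vec (dim_col A) \<and> vnorm v \<le> 1}"
    using iso[of "unit_vec (dim_col A) 0"] by force
qed (use iso in auto)

lemma vnorm_transpose_mult_vec_orthonormal_rows:
  assumes X: "X \<in> carrier_mat n m" and XX: "X * transpose_mat X = 1\<^sub>m n" and v: "v \<in> carrier_vec n"
  shows "vnorm (transpose_mat X *\<^sub>v v) = vnorm v"
proof -
  have "X *\<^sub>v (transpose_mat X *\<^sub>v v) = v"
    using X v by (simp flip: assoc_mult_mat_vec add: XX)
  then have "(transpose_mat X *\<^sub>v v) \<bullet> (transpose_mat X *\<^sub>v v) = v \<bullet> v"
    using transpose_vec_mult_scalar[OF X _ v, of "transpose_mat X *\<^sub>v v"] X v by simp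
  then show ?thesis
    unfolding vnorm_def by simp
qed

lemma frob_norm_power2_mult_le:
  assumes B: "B \<in> carrier_mat n m" and P: "P \<in> carrier_mat m r"
  shows "(frob_norm (B * P))\<^sup>2 \<le> (spec_norm P)\<^sup>2 * (frob_norm B)\<^sup>2"
proof -
  have "(frob_norm (B * P))\<^sup>2 = (\<Sum>i<n. (vnorm (transpose_mat P *\<^sub>v row B i))\<^sup>2)"
    using B P by (auto simp: frob_norm_power2_rows row_mult_eq_transpose_mult_vec simp del: row_mult
        intro!: sum.cong)
  also have "\<dots> \<le> (\<Sum>i<n. (spec_norm P * vnorm (row B i))\<^sup>2)"
    using B P by (intro sum_mono power_mono spec_norm_transpose_bound) (auto simp: vnorm_ge_0)
  also have "\<dots> = (spec_norm P)\<^sup>2 * (frob_norm B)\<^sup>2"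
    using B by (simp add: frob_norm_power2_rows power_mult_distrib sum_distrib_left)
  finally show ?thesis .
qed

lemma frob_norm_mult_orthonormal_rows:
  assumes B: "B \<in> carrier_mat r n" and X: "X \<in> carrier_mat n m" and XX: "X * transpose_mat X = 1\<^sub>m n"
  shows "frob_norm (B * X) = frob_norm B"
proof -
  have "(frob_norm (B * X))\<^sup>2 = (frob_norm B)\<^sup>2"
    using B X by (auto simp: frob_norm_power2_rows row_mult_eq_transpose_mult_vec
        vnorm_transpose_mult_vec_orthonormal_rows[OF X XX] simp del: row_mult intro!: sum.cong)
  then show ?thesis
    by (simp add: power2_eq_iff_nonneg frob_norm_ge_0)
qed

lemma (in vec_space) full_row_rank_imp_surj:
  assumes M: "M \<in> carrier_mat n p" and r: "rank M = n" and v: "v \<in> carrier_vec n"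
  shows "\<exists>x \<in> carrier_vec p. M *\<^sub>v x = v"
proof -
  obtain S where S: "maximal S (\<lambda>T. T \<subseteq> set (cols M) \<and> lin_indpt T)"
    using maximal_exists[of "\<lambda>T. T \<subseteq> set (cols M) \<and> lin_indpt T" "card (set (cols M))" "{}"]
    by (meson List.finite_set card_mono empty_iff empty_subsetI finite_lin_indpt2 rev_finite_subset)
  have S_cols: "S \<subseteq> set (cols M)" and S_indpt: "lin_indpt S"
    using S unfolding maximal_def by auto
  have cols: "set (cols M) \<subseteq> carrier_vec n"
    using M cols_dim by blast
  have card: "card S = n"
    using rank_card_indpt[OF M S] r by simp
  have "basis S"
    by (rule dim_li_is_basis, rule fin_dim, use S_cols finite_subset in blast,
        use S_cols cols S_indpt in auto, simp add: dim_is_n card)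
  then have "v \<in> span S"
    using v unfolding basis_def by auto
  also have "span S \<subseteq> span (set (cols M))"
    by (rule span_is_monotone[OF S_cols])
  finally have "v \<in> col_space M"
    unfolding col_space_def .
  then show ?thesis
    using col_space_eq[OF M] M by auto
qed

lemma det_gram_nonzero:
  fixes M :: "real mat"
  assumes M: "M \<in> carrier_mat n p" and r: "vec_space.rank n M = n"
  shows "det (M * transpose_mat M) \<noteq> 0"
proof
  assume "det (M * transpose_mat M) = 0"
  then obtain v where v: "v \<in> carrier_vec n" "v \<noteq> 0\<^sub>v n" and Gv: "(M * transpose_mat M) *\<^sub>v v = 0\<^sub>v n"
    using det_0_iff_vec_prod_zero[of "M * transpose_mat M" n] M by auto
  define w where "w = transpose_mat M *\<^sub>v v"
  have w: "w \<in> carrier_vec p"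
    using M v unfolding w_def by auto
  have "M *\<^sub>v w = 0\<^sub>v n"
    using Gv M v unfolding w_def by (simp add: assoc_mult_mat_vec)
  then have "w \<bullet> w = 0"
    using transpose_vec_mult_scalar[OF M w v(1)] M v(1) unfolding w_def[symmetric] by simp
  then have w0: "w = 0\<^sub>v p"
    using scalar_prod_self_eq_0_iff[OF w] by simp
  obtain x where x: "x \<in> carrier_vec p" "M *\<^sub>v x = v"
    using vec_space.full_row_rank_imp_surj[OF M r v(1)] by auto
  have "v \<bullet> v = w \<bullet> x"
    using transpose_vec_mult_scalar[OF M x(1) v(1)] x unfolding w_def by simp
  also have "\<dots> = 0"
    using w0 x by simp
  finally show False
    using v scalar_prod_self_eq_0_iff[OF v(1)] by simp
qed

lemma full_rank_det_gram_nonzero: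
  assumes A: "A \<in> carrier_mat n p" and "n \<le> p" and "full_rank A"
  shows "det (A * transpose_mat A) \<noteq> 0"
proof (rule det_gram_nonzero[OF A])
  show "vec_space.rank n A = n"
    using assms unfolding full_rank_def by simp
qed

lemma penrose_mult_right_eq:
  fixes A B C :: "real mat"
  assumes A: "A \<in> carrier_mat n p" and B: "B \<in> carrier_mat p n" and C: "C \<in> carrier_mat p n"
    and B1: "A * B * A = A" and B3: "transpose_mat (A * B) = A * B"
    and C1: "A * C * A = A" and C3: "transpose_mat (A * C) = A * C"
  shows "A * B = A * C"
proof -
  have At: "transpose_mat A \<in> carrier_mat p n" and Bt: "transpose_mat B \<in> carrier_mat n p"
    and AC: "A * C \<in> carrier_mat n n"
    using A B C by auto
  have "transpose_mat A = transpose_mat (A * C * A)"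
    using C1 by simp
  also have "\<dots> = transpose_mat A * (A * C)"
    using transpose_mult[OF AC A] C3 by simp
  finally have At_AC: "transpose_mat A = transpose_mat A * (A * C)" .
  have "A * B = transpose_mat B * transpose_mat A"
    using B3 transpose_mult[OF A B] by simp
  also have "\<dots> = (transpose_mat B * transpose_mat A) * (A * C)"
    using At_AC assoc_mult_mat[OF Bt At AC] by simp
  also have "\<dots> = (A * B * A) * C"
    using B3 transpose_mult[OF A B] assoc_mult_mat[OF mult_carrier_mat[OF A B] A C] by simp
  finally show ?thesis
    unfolding B1 .
qed

lemma penrose_mult_left_eq:
  fixes A B C :: "real mat"
  assumes A: "A \<in> carrier_mat n p" and B: "B \<in> carrier_mat p n" and C: "C \<in> carrier_mat p n"
    and B1: "A * B * A = A" and B4: "transpose_mat (B * A) = B * A"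
    and C1: "A * C * A = A" and C4: "transpose_mat (C * A) = C * A"
  shows "B * A = C * A"
proof -
  have At: "transpose_mat A \<in> carrier_mat p n" and Bt: "transpose_mat B \<in> carrier_mat n p"
    and CA: "C * A \<in> carrier_mat p p"
    using A B C by auto
  have "transpose_mat A = transpose_mat (A * (C * A))"
    using C1 assoc_mult_mat[OF A C A] by simp
  also have "\<dots> = (C * A) * transpose_mat A"
    using transpose_mult[OF A CA] C4 by simp
  finally have At_CA: "transpose_mat A = (C * A) * transpose_mat A" .
  have "B * A = transpose_mat A * transpose_mat B"
    using B4 transpose_mult[OF B A] by simp
  also have "\<dots> = (C * A) * (transpose_mat A * transpose_mat B)"
    using At_CA assoc_mult_mat[OF CA At Bt] by simp
  also have "\<dots> = C * (A * B * A)"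
    using B4 transpose_mult[OF B A] assoc_mult_mat[OF C A mult_carrier_mat[OF B A]]
      assoc_mult_mat[OF A B A] by simp
  finally show ?thesis
    unfolding B1 .
qed

lemma penrose_conditions_unique:
  fixes A B C :: "real mat"
  assumes A: "A \<in> carrier_mat n p" and B: "B \<in> carrier_mat p n" and C: "C \<in> carrier_mat p n"
    and B1: "A * B * A = A" and B2: "B * A * B = B"
    and B3: "transpose_mat (A * B) = A * B" and B4: "transpose_mat (B * A) = B * A"
    and C1: "A * C * A = A" and C2: "C * A * C = C"
    and C3: "transpose_mat (A * C) = A * C" and C4: "transpose_mat (C * A) = C * A"
  shows "B = C"
proof -
  have "B = B * (A * C)"
    using B2 penrose_mult_right_eq[OF A B C B1 B3 C1 C3] assoc_mult_mat[OF B A B] by simp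
  also have "\<dots> = C * A * C"
    using penrose_mult_left_eq[OF A B C B1 B4 C1 C4] assoc_mult_mat[OF B A C] by simp
  finally show ?thesis
    unfolding C2 .
qed

lemma pinv_eqI:
  fixes A B :: "real mat"
  assumes A: "A \<in> carrier_mat n p" and B: "B \<in> carrier_mat p n"
    and "A * B * A = A" and "B * A * B = B"
    and "transpose_mat (A * B) = A * B" and "transpose_mat (B * A) = B * A"
  shows "pinv A = B"
proof -
  have dims: "dim_row A = n" "dim_col A = p"
    using A by auto
  show ?thesis
    unfolding pinv_def dims
  proof (rule the_equality)
    fix C assume "C \<in> carrier_mat p n \<and> A * C * A = A \<and> C * A * C = C \<and>
      transpose_mat (A * C) = A * C \<and> transpose_mat (C * A) = C * A"
    then show "C = B"
      using penrose_conditions_unique[OF A _ B] assms by blast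
  qed (use assms in blast)
qed

lemma gram_symmetric:
  fixes A :: "'a :: comm_semiring_0 mat"
  shows "transpose_mat (A * transpose_mat A) = A * transpose_mat A"
  using transpose_mult[of A "dim_row A" "dim_col A" "transpose_mat A" "dim_row A"] by simp

lemma symmetric_right_inverse_symmetric:
  fixes G H :: "'a :: comm_ring_1 mat"
  assumes G: "G \<in> carrier_mat n n" and H: "H \<in> carrier_mat n n"
    and sym: "transpose_mat G = G" and GH: "G * H = 1\<^sub>m n"
  shows "transpose_mat H = H"
proof -
  have HtG: "transpose_mat H * G = 1\<^sub>m n"
    using transpose_mult[OF G H] sym GH by simp
  have "transpose_mat H = transpose_mat H * (G * H)"
    using GH H by simp
  also have "\<dots> = (transpose_mat H * G) * H"
    using G H by (simp add: assoc_mult_mat)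
  finally show ?thesis
    using HtG H by simp
qed

lemma pinv_full_row_rank:
  fixes A H :: "real mat"
  assumes A: "A \<in> carrier_mat n p" and H: "H \<in> carrier_mat n n"
    and AH: "A * transpose_mat A * H = 1\<^sub>m n"
  shows "pinv A = transpose_mat A * H" and "A * pinv A = 1\<^sub>m n"
proof -
  have At: "transpose_mat A \<in> carrier_mat p n"
    using A by simp
  have Hsym: "transpose_mat H = H"
    using symmetric_right_inverse_symmetric[OF _ H gram_symmetric AH] A by simp
  define B where "B = transpose_mat A * H"
  have B: "B \<in> carrier_mat p n"
    unfolding B_def using At H by simp
  have AB: "A * B = 1\<^sub>m n"
    unfolding B_def using AH assoc_mult_mat[OF A At H] by simp
  have "transpose_mat (B * A) = transpose_mat A * (H * A)"
    using transpose_mult[OF B A] transpose_mult[OF At H] Hsym unfolding B_def by simp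
  also have "\<dots> = B * A"
    unfolding B_def using assoc_mult_mat[OF At H A] by simp
  finally have BA: "transpose_mat (B * A) = B * A" .
  have "pinv A = B"
  proof (rule pinv_eqI[OF A B _ _ _ BA])
    show "A * B * A = A"
      using AB A by simp
    show "B * A * B = B"
      using AB assoc_mult_mat[OF B A B] B by simp
  qed (use AB in simp)
  then show "pinv A = transpose_mat A * H" and "A * pinv A = 1\<^sub>m n"
    using AB unfolding B_def by auto
qed

lemma mult_adj_mat_div_det:
  fixes G :: "real mat"
  assumes G: "G \<in> carrier_mat n n" and d: "det G \<noteq> 0"
  shows "G * ((1 / det G) \<cdot>\<^sub>m adj_mat G) = 1\<^sub>m n"
proof -
  have "G * ((1 / det G) \<cdot>\<^sub>m adj_mat G) = (1 / det G) \<cdot>\<^sub>m (G * adj_mat G)"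
    by (rule mult_smult_distrib[OF G adj_mat(1)[OF G]])
  also have "\<dots> = 1\<^sub>m n"
    using d by (simp add: adj_mat(2)[OF G]) (intro eq_matI, auto)
  finally show ?thesis .
qed

lemma pinv_right_inverse:
  fixes A :: "real mat"
  assumes A: "A \<in> carrier_mat n p" and d: "det (A * transpose_mat A) \<noteq> 0"
  shows "pinv A \<in> carrier_mat p n" and "A * pinv A = 1\<^sub>m n"
proof -
  have G: "A * transpose_mat A \<in> carrier_mat n n"
    using A by simp
  define H where "H = (1 / det (A * transpose_mat A)) \<cdot>\<^sub>m adj_mat (A * transpose_mat A)"
  have H: "H \<in> carrier_mat n n"
    unfolding H_def using adj_mat(1)[OF G] by simp
  have AH: "A * transpose_mat A * H = 1\<^sub>m n"
    unfolding H_def by (rule mult_adj_mat_div_det[OF G d])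
  show "pinv A \<in> carrier_mat p n"
    unfolding pinv_full_row_rank(1)[OF A H AH] using A H by simp
  show "A * pinv A = 1\<^sub>m n"
    by (rule pinv_full_row_rank(2)[OF A H AH])
qed

lemma frob_norm_pinv_full_row_rank:
  fixes M :: "real mat"
  assumes M: "M \<in> carrier_mat n p" and d: "det (M * transpose_mat M) \<noteq> 0"
  shows "(frob_norm (pinv M))\<^sup>2 =
    (\<Sum>i<n. det (mat_delete (M * transpose_mat M) i i)) / det (M * transpose_mat M)"
proof -
  define G where "G = M * transpose_mat M"
  define H where "H = (1 / det G) \<cdot>\<^sub>m adj_mat G"
  have Mt: "transpose_mat M \<in> carrier_mat p n" and G: "G \<in> carrier_mat n n"
    using M unfolding G_def by auto
  have H: "H \<in> carrier_mat n n"
    unfolding H_def using adj_mat(1)[OF G] by simp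
  have GH: "G * H = 1\<^sub>m n"
    unfolding H_def using mult_adj_mat_div_det[OF G] d G_def by simp
  have Q: "pinv M = transpose_mat M * H"
    using pinv_full_row_rank(1)[OF M H] GH unfolding G_def by simp
  have Hsym: "transpose_mat H = H"
    by (rule symmetric_right_inverse_symmetric[OF G H _ GH]) (simp add: G_def gram_symmetric)
  have "transpose_mat (pinv M) * pinv M = H * (G * H)"
    unfolding Q G_def using transpose_mult[OF Mt H] Hsym M H
    by (simp add: assoc_mult_mat[OF H M mult_carrier_mat[OF Mt H]] assoc_mult_mat[OF M Mt H])
  also have "\<dots> = H"
    using GH H by simp
  finally have QtQ: "transpose_mat (pinv M) * pinv M = H" .
  have "(frob_norm (pinv M))\<^sup>2 = (\<Sum>j<n. H $$ (j, j))"
    using QtQ Mt H unfolding frob_norm_power2_gram_diag Q by simp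
  also have "\<dots> = (\<Sum>j<n. det (mat_delete G j j) / det G)"
    unfolding H_def using G by (intro sum.cong) (auto simp: adj_mat_def cofactor_def)
  finally show ?thesis
    unfolding G_def by (simp add: sum_divide_distrib)
qed

lemma pick_UNIV_Diff_singleton: "pick (UNIV - {i}) r = insert_index i r"
proof (induction r)
  case 0
  show ?case
    by (cases "i = 0") (auto intro!: Least_equality simp: insert_index_def)
next
  case (Suc r)
  show ?case
    unfolding pick.simps Suc by (rule Least_equality) (auto simp: insert_index_def split: if_splits)
qed

lemma submatrix_split_rows_first: "submatrix A I J = submatrix (submatrix A I UNIV) UNIV J"
proof (rule eq_matI)
  fix r c assume "r < dim_row (submatrix (submatrix A I UNIV) UNIV J)"
    and "c < dim_col (submatrix (submatrix A I UNIV) UNIV J)"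
  then have r: "r < card {i. i < dim_row A \<and> i \<in> I}" and c: "c < card {j. j < dim_col A \<and> j \<in> J}"
    by (simp_all add: dim_submatrix)
  have "pick J c < dim_col A"
    using pick_le[OF c] .
  then show "submatrix A I J $$ (r, c) = submatrix (submatrix A I UNIV) UNIV J $$ (r, c)"
    using r c by (simp add: submatrix_index dim_submatrix pick_UNIV)
qed (simp_all add: dim_submatrix)

lemma submatrix_rows_gram:
  fixes B :: "'a :: comm_semiring_0 mat"
  shows "submatrix B I UNIV * transpose_mat (submatrix B I UNIV) = submatrix (B * transpose_mat B) I I"
proof (rule eq_matI)
  fix r s assume "r < dim_row (submatrix (B * transpose_mat B) I I)"
    and "s < dim_col (submatrix (B * transpose_mat B) I I)"
  then have r: "r < card {i. i < dim_row B \<and> i \<in> I}" and s: "s < card {i. i < dim_row B \<and> i \<in> I}"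
    by (simp_all add: dim_submatrix)
  have "pick I r < dim_row B" "pick I s < dim_row B"
    using pick_le[OF r] pick_le[OF s] .
  then show "(submatrix B I UNIV * transpose_mat (submatrix B I UNIV)) $$ (r, s)
      = submatrix (B * transpose_mat B) I I $$ (r, s)"
    using r s by (simp add: submatrix_index dim_submatrix pick_UNIV scalar_prod_def)
qed (simp_all add: dim_submatrix)

lemma mat_delete_eq_submatrix:
  assumes "i < dim_row A" and "j < dim_col A"
  shows "mat_delete A i j = submatrix A (UNIV - {i}) (UNIV - {j})"
proof -
  have card: "card {r. r < k \<and> r \<noteq> l} = k - 1" if "l < k" for k l :: nat
  proof -
    have "{r. r < k \<and> r \<noteq> l} = {..<k} - {l}"
      by auto
    then show ?thesis
      using that by simp
  qed
  show ?thesis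
  proof (rule eq_matI)
    fix r s assume "r < dim_row (submatrix A (UNIV - {i}) (UNIV - {j}))"
      and "s < dim_col (submatrix A (UNIV - {i}) (UNIV - {j}))"
    then have "r < card {r. r < dim_row A \<and> r \<in> UNIV - {i}}"
      and "s < card {s. s < dim_col A \<and> s \<in> UNIV - {j}}"
      by (simp_all only: dim_submatrix)
    moreover have "r < dim_row A - 1" "s < dim_col A - 1"
      using calculation assms by (simp_all add: card)
    ultimately show "mat_delete A i j $$ (r, s) = submatrix A (UNIV - {i}) (UNIV - {j}) $$ (r, s)"
      by (simp only: submatrix_index pick_UNIV_Diff_singleton)
        (simp add: mat_delete_def insert_index_def)
  qed (use assms in \<open>simp_all add: dim_submatrix card\<close>)
qed

lemma gram_cols_sub_del_row:
  assumes "i < dim_row X"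
  shows "cols_sub (del_row X i) S * transpose_mat (cols_sub (del_row X i) S)
       = mat_delete (cols_sub X S * transpose_mat (cols_sub X S)) i i"
proof -
  have "cols_sub (del_row X i) S = submatrix X (UNIV - {i}) S"
    unfolding cols_sub_def del_row_def by (rule submatrix_split_rows_first[symmetric])
  also have "\<dots> = submatrix (cols_sub X S) (UNIV - {i}) UNIV"
    unfolding cols_sub_def by (rule submatrix_split)
  moreover have "dim_row (cols_sub X S) = dim_row X"
    by (simp add: cols_sub_def dim_submatrix)
  ultimately show ?thesis
    using assms by (simp add: submatrix_rows_gram mat_delete_eq_submatrix)
qed

lemma cols_sub_carrier:
  assumes "X \<in> carrier_mat n m" and "S \<subseteq> {0..<m}"
  shows "cols_sub X S \<in> carrier_mat n (card S)"
proof -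
  have "{j. j < m \<and> j \<in> S} = S"
    using assms(2) by auto
  then show ?thesis
    using assms(1) unfolding cols_sub_def by (intro carrier_matI) (simp_all only: dim_submatrix, auto)
qed

lemma frob_norm_pinv_cols_sub:
  assumes X: "X \<in> carrier_mat n m"
    and d: "det (cols_sub X S * transpose_mat (cols_sub X S)) \<noteq> 0"
  shows "(frob_norm (pinv (cols_sub X S)))\<^sup>2 =
    (\<Sum>i<n. det (cols_sub (del_row X i) S * transpose_mat (cols_sub (del_row X i) S)))
    / det (cols_sub X S * transpose_mat (cols_sub X S))"
proof -
  have XS: "cols_sub X S \<in> carrier_mat n (dim_col (cols_sub X S))"
    by (rule carrier_matI) (use X in \<open>simp_all add: cols_sub_def dim_submatrix\<close>)
  have "(\<Sum>i<n. det (mat_delete (cols_sub X S * transpose_mat (cols_sub X S)) i i))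
      = (\<Sum>i<n. det (cols_sub (del_row X i) S * transpose_mat (cols_sub (del_row X i) S)))"
    using X by (intro sum.cong refl) (simp add: gram_cols_sub_del_row)
  then show ?thesis
    using frob_norm_pinv_full_row_rank[OF XS d] by simp
qed

lemma det_replace_col_right_inverse:
  fixes A Q :: "real mat"
  assumes A: "A \<in> carrier_mat n n" and Q: "Q \<in> carrier_mat n n" and AQ: "A * Q = 1\<^sub>m n"
    and b: "b \<in> carrier_vec n" and i: "i < n"
  shows "det (replace_col A b i) = (Q *\<^sub>v b) $ i * det A"
proof -
  have "A *\<^sub>v (Q *\<^sub>v b) = b"
    using A Q b by (simp flip: assoc_mult_mat_vec add: AQ)
  then show ?thesis
    using cramer_lemma_mat[OF A _ i, of "Q *\<^sub>v b"] Q b by simp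
qed

lemma sum_det_replace_col_power2:
  fixes A Q X :: "real mat"
  assumes A: "A \<in> carrier_mat n n" and Q: "Q \<in> carrier_mat n n" and AQ: "A * Q = 1\<^sub>m n"
    and X: "X \<in> carrier_mat n m"
  shows "(\<Sum>j<m. \<Sum>i<n. (det (replace_col A (col X j) i))\<^sup>2) / (det A)\<^sup>2 = (frob_norm (Q * X))\<^sup>2"
proof -
  have "det A * det Q = 1"
    using det_mult[OF A Q] AQ by simp
  then have dA: "det A \<noteq> 0"
    by auto
  have "(\<Sum>j<m. \<Sum>i<n. (det (replace_col A (col X j) i))\<^sup>2)
      = (\<Sum>j<m. \<Sum>i<n. ((Q * X) $$ (i, j))\<^sup>2 * (det A)\<^sup>2)"
    using X Q by (intro sum.cong refl)
      (simp add: det_replace_col_right_inverse[OF A Q AQ] power_mult_distrib)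
  also have "\<dots> = (frob_norm (Q * X))\<^sup>2 * (det A)\<^sup>2"
    using Q X by (subst sum.swap) (simp add: frob_norm_power2 sum_distrib_right)
  finally show ?thesis
    using dA by simp
qed

lemma frob_norm_power2_le_right_inverse:
  fixes Q X P :: "real mat"
  assumes Q: "Q \<in> carrier_mat n n" and X: "X \<in> carrier_mat n m" and P: "P \<in> carrier_mat m n"
    and XP: "X * P = 1\<^sub>m n"
  shows "(frob_norm Q)\<^sup>2 \<le> (spec_norm P)\<^sup>2 * (frob_norm (Q * X))\<^sup>2"
proof -
  have QXP: "Q * X * P = Q"
    using Q by (simp add: assoc_mult_mat[OF Q X P] XP)
  show ?thesis
    using frob_norm_power2_mult_le[OF mult_carrier_mat[OF Q X] P] unfolding QXP .
qed

lemma frob_norm_power2_eq_orthonormal_rows: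
  fixes Q X :: "real mat"
  assumes Q: "Q \<in> carrier_mat n n" and X: "X \<in> carrier_mat n m" and XX: "X * transpose_mat X = 1\<^sub>m n"
  shows "(frob_norm Q)\<^sup>2 = (spec_norm (pinv X))\<^sup>2 * (frob_norm (Q * X))\<^sup>2"
proof (cases "n = 0")
  case True
  then show ?thesis
    using Q by (simp add: frob_norm_power2)
next
  case False
  have "pinv X = transpose_mat X"
    using pinv_full_row_rank(1)[OF X one_carrier_mat] XX X by simp
  moreover have "spec_norm (transpose_mat X) = 1"
    using False X vnorm_transpose_mult_vec_orthonormal_rows[OF X XX]
    by (intro spec_norm_eq_1_if_isometry) auto
  ultimately show ?thesis
    using frob_norm_mult_orthonormal_rows[OF Q X XX] by simp
qed

theorem lemma3p8:
  fixes X :: "real mat" and n m k :: nat and S :: "nat set"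
  assumes X: "X \<in> carrier_mat n m" and nm: "n \<le> m" and fr: "full_rank X"
    and S: "S \<subseteq> {0..<m}" and cardS: "card S = k" and nk: "n \<le> k" and km: "k \<le> m"
    and frS: "full_rank (cols_sub X S)"
  shows "((frob_norm (pinv (cols_sub X S)))^2 =
           (\<Sum>i<n. det (cols_sub (del_row X i) S * transpose_mat (cols_sub (del_row X i) S)))
           / det (cols_sub X S * transpose_mat (cols_sub X S))) \<and>
         (k = n \<longrightarrow>
           (frob_norm (pinv (cols_sub X S)))^2 \<le>
           (spec_norm (pinv X))^2 *
           ((\<Sum>j<m. \<Sum>i<n. (det (replace_col (cols_sub X S) (col X j) i))^2)
            / (det (cols_sub X S))^2)) \<and>
         (k = n \<longrightarrow> X * transpose_mat X = 1\<^sub>m n \<longrightarrow>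
           (frob_norm (pinv (cols_sub X S)))^2 =
           (spec_norm (pinv X))^2 *
           ((\<Sum>j<m. \<Sum>i<n. (det (replace_col (cols_sub X S) (col X j) i))^2)
            / (det (cols_sub X S))^2))"
proof -
  define XS where "XS = cols_sub X S"
  have XS: "XS \<in> carrier_mat n k"
    using cols_sub_carrier[OF X S] cardS unfolding XS_def by simp
  have dXS: "det (XS * transpose_mat XS) \<noteq> 0"
    by (rule full_rank_det_gram_nonzero[OF XS nk frS[folded XS_def]])
  note pinvX = pinv_right_inverse[OF X full_rank_det_gram_nonzero[OF X nm fr]]
  let ?R = "(\<Sum>j<m. \<Sum>i<n. (det (replace_col XS (col X j) i))\<^sup>2) / (det XS)\<^sup>2"
  have "(frob_norm (pinv XS))\<^sup>2 \<le> (spec_norm (pinv X))\<^sup>2 * ?R \<and>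
      (X * transpose_mat X = 1\<^sub>m n \<longrightarrow> (frob_norm (pinv XS))\<^sup>2 = (spec_norm (pinv X))\<^sup>2 * ?R)"
    if "k = n"
  proof -
    have XSn: "XS \<in> carrier_mat n n"
      using XS that by simp
    note pinvXS = pinv_right_inverse[OF XSn dXS]
    have "?R = (frob_norm (pinv XS * X))\<^sup>2"
      by (rule sum_det_replace_col_power2[OF XSn pinvXS X])
    then show ?thesis
      using frob_norm_power2_le_right_inverse[OF pinvXS(1) X pinvX]
        frob_norm_power2_eq_orthonormal_rows[OF pinvXS(1) X] by simp
  qed
  then show ?thesis
    using frob_norm_pinv_cols_sub[OF X dXS[unfolded XS_def]] unfolding XS_def by auto
qed

end
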